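(* Let $M$ be the free $\mathbb{Z}[p^{\pm1}]$-module with free basis $e_1,\dots,e_n,f_1,\dots,f_n$. For $i=1,\dots,n-1$ define module automorphisms $\Theta(\sigma_i):e_i\mapsto e_{i+1}+pf_{i+1},\ e_{i+1}\mapsto e_i-pf_{i+1}$ and $\Theta(\rho_i):e_i\mapsto e_{i+1},\ e_{i+1}\mapsto e_i,\ f_i\mapsto f_{i+1},\ f_{i+1}\mapsto f_i$, all other basis elements being fixed. Then this assignment extends to a linear representation $\Theta:FVB_n\to{\rm Aut}(M)$, and this representation does not preserve the forbidden relations, i.e. for $n\ge3$ and $i=1,\dots,n-2$, $\Theta(\rho_i\sigma_{i+1}\sigma_i)\ne\Theta(\sigma_{i+1}\sigma_i\rho_{i+1})$.
   Context: $FVB_n$ is the flat virtual braid group: generators $\sigma_1,\dots,\sigma_{n-1},\rho_1,\dots,\rho_{n-1}$, relations $\sigma_i\sigma_j=\sigma_j\sigma_i$, $\rho_i\rho_j=\rho_j\rho_i$, $\sigma_i\rho_j=\rho_j\sigma_i$ for $|i-j|\ge2$; $\sigma_i\sigma_{i+1}\sigma_i=\sigma_{i+1}\sigma_i\sigma_{i+1}$; $\rho_i\rho_{i+1}\rho_i=\rho_{i+1}\rho_i\rho_{i+1}$; $\rho_i\rho_{i+1}\sigma_i=\sigma_{i+1}\rho_i\rho_{i+1}$; $\rho_i^2=\sigma_i^2=1$. The forbidden relations are $\rho_i\sigma_{i+1}\sigma_i=\sigma_{i+1}\sigma_i\rho_{i+1}$. Maps are composed on the right: $(fg)(x)=g(f(x))$.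 *)

theory Defs
  imports "HOL-Computational_Algebra.Formal_Laurent_Series"
begin

text \<open>The ring Z[p, p^-1]: Laurent polynomials, i.e. finitely supported formal Laurent
  series over int; the variable p is fls_X.\<close>
definition laurent_poly :: "int fls set" where
  "laurent_poly = {f. finite {k. fls_nth f k \<noteq> 0}}"

abbreviation pvar :: "int fls" where "pvar \<equiv> fls_X"

datatype basis = E nat | F nat

definition basis_set :: "nat \<Rightarrow> basis set" where
  "basis_set n = {E i | i. 1 \<le> i \<and> i \<le> n} \<union> {F i | i. 1 \<le> i \<and> i \<le> n}"

text \<open>The free module M of rank 2n over Z[p^(+-1)], as coordinate vectors supported on the basis.\<close>
definition Mod :: "nat \<Rightarrow> (basis \<Rightarrow> int fls) set" where
  "Mod n = {v. (\<forall>b. b \<notin> basis_set n \<longrightarrow> v b = 0) \<and> (\<forall>b. v b \<in> laurent_poly)}"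

definition unitv :: "basis \<Rightarrow> basis \<Rightarrow> int fls" where
  "unitv b = (\<lambda>c. if c = b then 1 else 0)"

datatype gen = Sig nat | Rho nat

definition fvb_gens :: "nat \<Rightarrow> gen set" where
  "fvb_gens n = {Sig i | i. 1 \<le> i \<and> i < n} \<union> {Rho i | i. 1 \<le> i \<and> i < n}"

fun theta_img :: "gen \<Rightarrow> basis \<Rightarrow> (basis \<Rightarrow> int fls)" where
  "theta_img (Sig i) b =
     (if b = E i then (\<lambda>c. unitv (E (i+1)) c + pvar * unitv (F (i+1)) c)
      else if b = E (i+1) then (\<lambda>c. unitv (E i) c - pvar * unitv (F (i+1)) c)
      else unitv b)"
| "theta_img (Rho i) b =
     (if b = E i then unitv (E (i+1))
      else if b = E (i+1) then unitv (E i)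
      else if b = F i then unitv (F (i+1))
      else if b = F (i+1) then unitv (F i)
      else unitv b)"

definition lin_ext :: "nat \<Rightarrow> (basis \<Rightarrow> (basis \<Rightarrow> int fls)) \<Rightarrow> (basis \<Rightarrow> int fls) \<Rightarrow> (basis \<Rightarrow> int fls)" where
  "lin_ext n img v = (\<lambda>b. \<Sum>c\<in>basis_set n. v c * img c b)"

definition Theta :: "nat \<Rightarrow> gen \<Rightarrow> (basis \<Rightarrow> int fls) \<Rightarrow> (basis \<Rightarrow> int fls)" where
  "Theta n g = lin_ext n (theta_img g)"

text \<open>Image of a word; maps composed on the right: (fg)(x) = g(f(x)).\<close>
fun ThetaW :: "nat \<Rightarrow> gen list \<Rightarrow> (basis \<Rightarrow> int fls) \<Rightarrow> (basis \<Rightarrow> int fls)" where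
  "ThetaW n [] = id"
| "ThetaW n (g # w) = ThetaW n w \<circ> Theta n g"

definition fvb_rels :: "nat \<Rightarrow> (gen list \<times> gen list) set" where
  "fvb_rels n =
     {([Sig i, Sig j], [Sig j, Sig i]) | i j. 1 \<le> i \<and> i < n \<and> 1 \<le> j \<and> j < n \<and> (i + 2 \<le> j \<or> j + 2 \<le> i)}
   \<union> {([Rho i, Rho j], [Rho j, Rho i]) | i j. 1 \<le> i \<and> i < n \<and> 1 \<le> j \<and> j < n \<and> (i + 2 \<le> j \<or> j + 2 \<le> i)}
   \<union> {([Sig i, Rho j], [Rho j, Sig i]) | i j. 1 \<le> i \<and> i < n \<and> 1 \<le> j \<and> j < n \<and> (i + 2 \<le> j \<or> j + 2 \<le> i)}
   \<union> {([Sig i, Sig (i+1), Sig i], [Sig (i+1), Sig i, Sig (i+1)]) | i. 1 \<le> i \<and> i + 1 < n}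
   \<union> {([Rho i, Rho (i+1), Rho i], [Rho (i+1), Rho i, Rho (i+1)]) | i. 1 \<le> i \<and> i + 1 < n}
   \<union> {([Rho i, Rho (i+1), Sig i], [Sig (i+1), Rho i, Rho (i+1)]) | i. 1 \<le> i \<and> i + 1 < n}
   \<union> {([Rho i, Rho i], []) | i. 1 \<le> i \<and> i < n}
   \<union> {([Sig i, Sig i], []) | i. 1 \<le> i \<and> i < n}"

end

theory Submission
  imports Defs "HOL-Combinatorics.Transposition"
begin

text \<open>On coordinate vectors v, Theta(rho_i) permutes the entries by the involution swapping
  e_i with e_(i+1) and f_i with f_(i+1), while Theta(sigma_i) swaps the e_i and e_(i+1) entries
  and adds p (v(e_i) - v(e_(i+1))) to the f_(i+1) entry; this is again an involution, because the
  correction changes sign under the swap. All defining relations of FVB_n then become identities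
  between these explicit maps, valid on arbitrary coordinate vectors. The forbidden relation fails
  on f_i: the right-hand word fixes f_i, whereas rho_i moves it to f_(i+1), which sigma_(i+1) and
  sigma_i then fix.\<close>

lemma laurent_poly_0 [simp]: "0 \<in> laurent_poly"
  by (simp add: laurent_poly_def)

lemma laurent_poly_1 [simp]: "1 \<in> laurent_poly"
  unfolding laurent_poly_def mem_Collect_eq by (rule finite_subset[of _ "{0}"]) auto

lemma laurent_poly_add [simp]: "f \<in> laurent_poly \<Longrightarrow> g \<in> laurent_poly \<Longrightarrow> f + g \<in> laurent_poly"
  unfolding laurent_poly_def mem_Collect_eq
  by (rule finite_subset[of _ "{k. fls_nth f k \<noteq> 0} \<union> {k. fls_nth g k \<noteq> 0}"]) auto

lemma laurent_poly_diff [simp]: "f \<in> laurent_poly \<Longrightarrow> g \<in> laurent_poly \<Longrightarrow> f - g \<in> laurent_poly"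
  unfolding laurent_poly_def mem_Collect_eq
  by (rule finite_subset[of _ "{k. fls_nth f k \<noteq> 0} \<union> {k. fls_nth g k \<noteq> 0}"]) auto

lemma laurent_poly_X_mult [simp]: "f \<in> laurent_poly \<Longrightarrow> pvar * f \<in> laurent_poly"
  unfolding laurent_poly_def mem_Collect_eq
  by (rule finite_surj[of _ _ "\<lambda>k. k + 1"])
    (auto simp: fls_X_times_conv_shift intro: image_eqI[of _ _ "_ - 1"])

lemma finite_basis_set [simp]: "finite (basis_set n)"
proof -
  have "basis_set n = E ` {1..n} \<union> F ` {1..n}"
    unfolding basis_set_def by auto
  then show ?thesis by simp
qed

lemma basis_set_iff [simp]:
  "E i \<in> basis_set n \<longleftrightarrow> 1 \<le> i \<and> i \<le> n"
  "F i \<in> basis_set n \<longleftrightarrow> 1 \<le> i \<and> i \<le> n"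
  unfolding basis_set_def by auto

lemma Mod_outside: "v \<in> Mod n \<Longrightarrow> b \<notin> basis_set n \<Longrightarrow> v b = 0"
  unfolding Mod_def by auto

lemma Mod_laurent_poly [simp]: "v \<in> Mod n \<Longrightarrow> v b \<in> laurent_poly"
  unfolding Mod_def by auto

lemma unitv_in_Mod: "b \<in> basis_set n \<Longrightarrow> unitv b \<in> Mod n"
  unfolding Mod_def unitv_def by auto

lemma Mod_comp_transpose [simp]:
  "v \<in> Mod n \<Longrightarrow> a \<in> basis_set n \<Longrightarrow> b \<in> basis_set n \<Longrightarrow> v \<circ> transpose a b \<in> Mod n"
  unfolding Mod_def by (auto simp: transpose_def)

lemma Mod_fun_upd [simp]:
  "v \<in> Mod n \<Longrightarrow> b \<in> basis_set n \<Longrightarrow> x \<in> laurent_poly \<Longrightarrow> v(b := x) \<in> Mod n"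
  unfolding Mod_def by auto

lemma sum_basis_set_delta: "v \<in> Mod n \<Longrightarrow> (\<Sum>c\<in>basis_set n. if c = b then v c else 0) = v b"
  by (simp add: sum.delta Mod_outside)

definition rho_act :: "nat \<Rightarrow> (basis \<Rightarrow> int fls) \<Rightarrow> basis \<Rightarrow> int fls" where
  "rho_act i v = v \<circ> transpose (E i) (E (Suc i)) \<circ> transpose (F i) (F (Suc i))"

definition sigma_act :: "nat \<Rightarrow> (basis \<Rightarrow> int fls) \<Rightarrow> basis \<Rightarrow> int fls" where
  "sigma_act i v = (v \<circ> transpose (E i) (E (Suc i)))
     (F (Suc i) := v (F (Suc i)) + pvar * (v (E i) - v (E (Suc i))))"

fun gen_act :: "gen \<Rightarrow> (basis \<Rightarrow> int fls) \<Rightarrow> basis \<Rightarrow> int fls" where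
  "gen_act (Sig i) = sigma_act i"
| "gen_act (Rho i) = rho_act i"

lemma Theta_Rho: "v \<in> Mod n \<Longrightarrow> Theta n (Rho i) v = rho_act i v"
proof
  fix b
  assume v: "v \<in> Mod n"
  have "v c * theta_img (Rho i) c b
      = (if c = (transpose (E i) (E (Suc i)) \<circ> transpose (F i) (F (Suc i))) b then v c else 0)" for c
    by (auto simp: unitv_def transpose_def)
  then show "Theta n (Rho i) v b = rho_act i v b"
    by (simp add: Theta_def lin_ext_def rho_act_def sum_basis_set_delta[OF v])
qed

lemma Theta_Sig: "v \<in> Mod n \<Longrightarrow> Theta n (Sig i) v = sigma_act i v"
proof
  fix b
  assume v: "v \<in> Mod n"
  have "v c * theta_img (Sig i) c b
      = (if c = transpose (E i) (E (Suc i)) b then v c else 0)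
        + (if b = F (Suc i)
           then pvar * ((if c = E i then v c else 0) - (if c = E (Suc i) then v c else 0)) else 0)" for c
    by (auto simp: unitv_def transpose_def algebra_simps)
  then show "Theta n (Sig i) v b = sigma_act i v b"
    by (simp add: Theta_def lin_ext_def sigma_act_def sum.distrib sum_subtractf
        sum_basis_set_delta[OF v] flip: sum_distrib_left)
qed

lemma Theta_eq_gen_act: "v \<in> Mod n \<Longrightarrow> Theta n g v = gen_act g v"
  by (cases g) (simp_all add: Theta_Sig Theta_Rho)

lemma sigma_act_involutive: "sigma_act i (sigma_act i v) = v"
  by (auto simp: fun_eq_iff sigma_act_def transpose_def algebra_simps)

lemma rho_act_involutive: "rho_act i (rho_act i v) = v"
  by (auto simp: fun_eq_iff rho_act_def transpose_def)

lemma sigma_act_commute: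
  "i + 2 \<le> j \<or> j + 2 \<le> i \<Longrightarrow> sigma_act i (sigma_act j v) = sigma_act j (sigma_act i v)"
  by (auto simp: fun_eq_iff sigma_act_def transpose_def)

lemma rho_act_commute:
  "i + 2 \<le> j \<or> j + 2 \<le> i \<Longrightarrow> rho_act i (rho_act j v) = rho_act j (rho_act i v)"
  by (auto simp: fun_eq_iff rho_act_def transpose_def)

lemma sigma_rho_act_commute:
  "i + 2 \<le> j \<or> j + 2 \<le> i \<Longrightarrow> sigma_act i (rho_act j v) = rho_act j (sigma_act i v)"
  by (auto simp: fun_eq_iff sigma_act_def rho_act_def transpose_def)

lemma sigma_act_braid:
  "sigma_act i (sigma_act (Suc i) (sigma_act i v)) = sigma_act (Suc i) (sigma_act i (sigma_act (Suc i) v))"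
  by (auto simp: fun_eq_iff sigma_act_def transpose_def algebra_simps)

lemma rho_act_braid:
  "rho_act i (rho_act (Suc i) (rho_act i v)) = rho_act (Suc i) (rho_act i (rho_act (Suc i) v))"
  by (auto simp: fun_eq_iff rho_act_def transpose_def)

lemma rho_rho_sigma_act:
  "sigma_act i (rho_act (Suc i) (rho_act i v)) = rho_act (Suc i) (rho_act i (sigma_act (Suc i) v))"
  by (auto simp: fun_eq_iff sigma_act_def rho_act_def transpose_def)

lemma gen_act_in_Mod: "g \<in> fvb_gens n \<Longrightarrow> v \<in> Mod n \<Longrightarrow> gen_act g v \<in> Mod n"
  by (auto simp: fvb_gens_def sigma_act_def rho_act_def)

lemma gen_act_involutive: "gen_act g (gen_act g v) = v"
  by (cases g) (simp_all add: sigma_act_involutive rho_act_involutive)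

lemma Theta_bij: "g \<in> fvb_gens n \<Longrightarrow> bij_betw (Theta n g) (Mod n) (Mod n)"
  by (rule bij_betw_byWitness[where f' = "Theta n g"])
    (auto simp: Theta_eq_gen_act gen_act_in_Mod gen_act_involutive)

text \<open>Both ThetaW and fold apply the first letter of a word first.\<close>

lemma ThetaW_eq_fold:
  "set w \<subseteq> fvb_gens n \<Longrightarrow> v \<in> Mod n \<Longrightarrow> ThetaW n w v = fold gen_act w v"
  by (induction w arbitrary: v) (simp_all add: Theta_eq_gen_act gen_act_in_Mod)

lemma fvb_rels_words_in_gens:
  "(u, w) \<in> fvb_rels n \<Longrightarrow> set u \<subseteq> fvb_gens n \<and> set w \<subseteq> fvb_gens n"
  unfolding fvb_rels_def fvb_gens_def by fastforce

lemma fold_gen_act_fvb_rels: "(u, w) \<in> fvb_rels n \<Longrightarrow> fold gen_act u = fold gen_act w"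
  unfolding fvb_rels_def
  by (auto simp: fun_eq_iff sigma_act_commute rho_act_commute sigma_rho_act_commute
      sigma_act_braid rho_act_braid rho_rho_sigma_act sigma_act_involutive rho_act_involutive)

lemma forbidden_relation_fails:
  "sigma_act i (sigma_act (Suc i) (rho_act i (unitv (F i))))
     \<noteq> rho_act (Suc i) (sigma_act i (sigma_act (Suc i) (unitv (F i))))"
proof -
  have "sigma_act i (sigma_act (Suc i) (rho_act i (unitv (F i)))) (F (Suc i)) = 1"
    by (simp add: sigma_act_def rho_act_def unitv_def transpose_def)
  moreover have "rho_act (Suc i) (sigma_act i (sigma_act (Suc i) (unitv (F i)))) (F (Suc i)) = 0"
    by (simp add: sigma_act_def rho_act_def unitv_def transpose_def)
  ultimately show ?thesis by force
qed

lemma ThetaW_fvb_rels: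
  assumes "(u, w) \<in> fvb_rels n" and "v \<in> Mod n"
  shows "ThetaW n u v = ThetaW n w v"
  using assms fold_gen_act_fvb_rels[OF assms(1)] fvb_rels_words_in_gens[OF assms(1)]
  by (simp add: ThetaW_eq_fold)

lemma ThetaW_forbidden_relation_fails:
  assumes "1 \<le> i" and "i \<le> n - 2"
  shows "\<exists>v\<in>Mod n.
    ThetaW n [Rho i, Sig (i+1), Sig i] v \<noteq> ThetaW n [Sig (i+1), Sig i, Rho (i+1)] v"
proof
  have words:
    "set [Rho i, Sig (i+1), Sig i] \<subseteq> fvb_gens n" "set [Sig (i+1), Sig i, Rho (i+1)] \<subseteq> fvb_gens n"
    using assms by (auto simp: fvb_gens_def)
  show f_i: "unitv (F i) \<in> Mod n"
    using assms by (simp add: unitv_in_Mod)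
  show "ThetaW n [Rho i, Sig (i+1), Sig i] (unitv (F i))
      \<noteq> ThetaW n [Sig (i+1), Sig i, Rho (i+1)] (unitv (F i))"
    unfolding ThetaW_eq_fold[OF words(1) f_i] ThetaW_eq_fold[OF words(2) f_i]
    using forbidden_relation_fails by simp
qed

theorem theorem2:
  fixes n :: nat
  shows "(\<forall>g\<in>fvb_gens n. bij_betw (Theta n g) (Mod n) (Mod n))
       \<and> (\<forall>(u, w)\<in>fvb_rels n. \<forall>v\<in>Mod n. ThetaW n u v = ThetaW n w v)
       \<and> (3 \<le> n \<longrightarrow> (\<forall>i. 1 \<le> i \<and> i \<le> n - 2 \<longrightarrow>
            (\<exists>v\<in>Mod n. ThetaW n [Rho i, Sig (i+1), Sig i] v
                        \<noteq> ThetaW n [Sig (i+1), Sig i, Rho (i+1)] v)))"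
  using Theta_bij ThetaW_fvb_rels ThetaW_forbidden_relation_fails by fast

end
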